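(* Let $\Omega\subset\mathbb{R}^n$ ($n\ge1$) be a bounded domain, $T>0$, $\delta\in(0,1)\cup(1,2)$, $\bar Q:=\bar\Omega\times[0,T]$ and $Q:=\Omega\times(0,T]$. Let $u$ be a classical solution of the initial-boundary value problem described in the context, and suppose $u\in C^{2,\bar\delta}(\bar Q)$. Then the initial value $\phi_0$ satisfies $L_0\phi_0(x)=f(x,0)$ for all $x\in\Omega$, where \[ L_0w(x):=-\sum_{i,j=1}^n p_{ij}(x,0)\frac{\partial^2 w}{\partial x_i\partial x_j}(x)+\sum_{i=1}^n q_i(x,0)\frac{\partial w}{\partial x_i}(x)+r(x,0)w(x). \]
   Context: Set $\bar\delta=1$ if $0<\delta<1$ and $\bar\delta=2$ if $1<\delta<2$. The Caputo fractional derivative is \[ D_t^\delta g(x,t):=\frac{1}{\Gamma(\bar\delta-\delta)}\int_0^t (t-s)^{\bar\delta-\delta-1}\,\frac{\partial^{\bar\delta}g(x,s)}{\partial s^{\bar\delta}}\,ds,\qquad x\in\Omega,\ 0<t\le T. \] The problem is: $D_t^\delta u-\sum_{i,j=1}^n p_{ij}(x,t)\,\partial^2u/\partial x_i\partial x_j+\sum_{i=1}^n q_i(x,t)\,\partial u/\partial x_i+r(x,t)u=f(x,t)$ for $(x,t)\in Q$; $u(x,t)=\psi(x,t)$ for $(x,t)\in\partial\Omega\times(0,T]$; $u(x,0)=\phi_0(x)$ for $x\in\bar\Omega$; and, only when $1<\delta<2$, $u_t(x,0)=\phi_1(x)$ for $x\in\Omega$. The spatial operator is uniformly elliptic on $Q$;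 $p_{ij},q_i,r,\psi,\phi_0,\phi_1$ are continuous on the closures of their domains; $f$ is continuous on $\bar Q$; and $\phi_0(x)=\psi(x,0)$ for all $x\in\partial\Omega$. A classical solution is a function $u$ continuous on $\bar Q$ for which $D_t^\delta u$, $\partial u/\partial x_i$, $\partial^2u/\partial x_i\partial x_j$ exist at every point of $Q$ and the equation and conditions hold pointwise. $C^{2,\bar\delta}(\bar Q)$ denotes the set of $w\in C(\bar Q)$ such that $\partial w/\partial x_i$, $\partial^2w/\partial x_i\partial x_j$ ($1\le i,j\le n$) and $\partial^k w/\partial t^k$ for $k=1,\bar\delta$ all lie in $C(\bar Q)$. *)

theory Defs
  imports "HOL-Analysis.Analysis"
begin

text \<open>Order of the classical derivative inside the Caputo derivative:
  1 if 0 < delta < 1, 2 if 1 < delta < 2.\<close>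
definition dbar :: "real \<Rightarrow> nat" where
  "dbar \<delta> = (if \<delta> < 1 then 1 else 2)"

definition has_partial :: "(real^'n \<Rightarrow> real) \<Rightarrow> 'n \<Rightarrow> real^'n \<Rightarrow> real \<Rightarrow> bool" where
  "has_partial w i x D \<longleftrightarrow> ((\<lambda>h. w (x + h *\<^sub>R axis i 1)) has_real_derivative D) (at 0)"

text \<open>Caputo derivative of order delta of g (function of time) at t exists and equals D:
  D = 1/Gamma(dbar-delta) * integral_0^t (t-s)^(dbar-delta-1) g^{(dbar)}(s) ds,
  the integral existing and the classical derivative g^{(dbar)} existing on (0,t).\<close>
definition has_caputo :: "real \<Rightarrow> (real \<Rightarrow> real) \<Rightarrow> real \<Rightarrow> real \<Rightarrow> bool" where
  "has_caputo \<delta> g t D \<longleftrightarrow>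
     (\<exists>dg. (if dbar \<delta> = 1
             then (\<forall>s\<in>{0<..<t}. (g has_real_derivative dg s) (at s))
             else (\<exists>g1. \<forall>s\<in>{0<..<t}. (g has_real_derivative g1 s) (at s) \<and>
                                       (g1 has_real_derivative dg s) (at s)))
         \<and> ((\<lambda>s. (t - s) powr (real (dbar \<delta>) - \<delta> - 1) * dg s)
               has_integral (Gamma (real (dbar \<delta>) - \<delta>) * D)) {0..t})"

definition spatial_op ::
  "('n \<Rightarrow> 'n \<Rightarrow> real^'n \<Rightarrow> real \<Rightarrow> real) \<Rightarrow> ('n \<Rightarrow> real^'n \<Rightarrow> real \<Rightarrow> real) \<Rightarrow>
   (real^'n \<Rightarrow> real \<Rightarrow> real) \<Rightarrow> real^'n \<Rightarrow> real \<Rightarrow>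
   ('n \<Rightarrow> 'n \<Rightarrow> real) \<Rightarrow> ('n \<Rightarrow> real) \<Rightarrow> real \<Rightarrow> real" where
  "spatial_op p q r x t Wxx Wx W =
     - (\<Sum>i\<in>UNIV. \<Sum>j\<in>UNIV. p i j x t * Wxx i j) + (\<Sum>i\<in>UNIV. q i x t * Wx i) + r x t * W"

definition cylQ :: "(real^'n) set \<Rightarrow> real \<Rightarrow> ((real^'n) \<times> real) set" where
  "cylQ \<Omega> T = \<Omega> \<times> {0<..T}"

definition cylQbar :: "(real^'n) set \<Rightarrow> real \<Rightarrow> ((real^'n) \<times> real) set" where
  "cylQbar \<Omega> T = closure \<Omega> \<times> {0..T}"

definition classical_solution ::
  "(real^'n) set \<Rightarrow> real \<Rightarrow> real \<Rightarrow>
   ('n \<Rightarrow> 'n \<Rightarrow> real^'n \<Rightarrow> real \<Rightarrow> real) \<Rightarrow> ('n \<Rightarrow> real^'n \<Rightarrow> real \<Rightarrow> real) \<Rightarrow>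
   (real^'n \<Rightarrow> real \<Rightarrow> real) \<Rightarrow> (real^'n \<Rightarrow> real \<Rightarrow> real) \<Rightarrow> (real^'n \<Rightarrow> real \<Rightarrow> real) \<Rightarrow>
   (real^'n \<Rightarrow> real) \<Rightarrow> (real^'n \<Rightarrow> real) \<Rightarrow> (real^'n \<Rightarrow> real \<Rightarrow> real) \<Rightarrow> bool" where
  "classical_solution \<Omega> T \<delta> p q r f \<psi> \<phi>0 \<phi>1 u \<longleftrightarrow>
     continuous_on (cylQbar \<Omega> T) (\<lambda>(x, t). u x t) \<and>
     (\<exists>Ux Uxx. \<forall>(x, t)\<in>cylQ \<Omega> T.
        (\<forall>i. has_partial (\<lambda>y. u y t) i x (Ux i x t)) \<and>
        (\<forall>i j. has_partial (\<lambda>y. Ux j y t) i x (Uxx i j x t)) \<and>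
        (\<exists>D. has_caputo \<delta> (\<lambda>s. u x s) t D \<and>
             D + spatial_op p q r x t (\<lambda>i j. Uxx i j x t) (\<lambda>i. Ux i x t) (u x t) = f x t)) \<and>
     (\<forall>x\<in>frontier \<Omega>. \<forall>t\<in>{0<..T}. u x t = \<psi> x t) \<and>
     (\<forall>x\<in>closure \<Omega>. u x 0 = \<phi>0 x) \<and>
     (1 < \<delta> \<longrightarrow> (\<forall>x\<in>\<Omega>. ((\<lambda>s. u x s) has_real_derivative \<phi>1 x) (at 0 within {0..T})))"

definition C2dbar :: "real \<Rightarrow> (real^'n) set \<Rightarrow> real \<Rightarrow> (real^'n \<Rightarrow> real \<Rightarrow> real) \<Rightarrow> bool" where
  "C2dbar \<delta> \<Omega> T u \<longleftrightarrow>
     continuous_on (cylQbar \<Omega> T) (\<lambda>(x, t). u x t) \<and>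
     (\<exists>Ux Uxx Ut Utt.
        (\<forall>i. continuous_on (cylQbar \<Omega> T) (\<lambda>(x, t). Ux i x t)) \<and>
        (\<forall>i j. continuous_on (cylQbar \<Omega> T) (\<lambda>(x, t). Uxx i j x t)) \<and>
        continuous_on (cylQbar \<Omega> T) (\<lambda>(x, t). Ut x t) \<and>
        (dbar \<delta> = 2 \<longrightarrow> continuous_on (cylQbar \<Omega> T) (\<lambda>(x, t). Utt x t)) \<and>
        (\<forall>(x, t)\<in>cylQ \<Omega> T.
           (\<forall>i. has_partial (\<lambda>y. u y t) i x (Ux i x t)) \<and>
           (\<forall>i j. has_partial (\<lambda>y. Ux j y t) i x (Uxx i j x t)) \<and>
           ((\<lambda>s. u x s) has_real_derivative Ut x t) (at t within {0..T}) \<and>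
           (dbar \<delta> = 2 \<longrightarrow> ((\<lambda>s. Ut x s) has_real_derivative Utt x t) (at t within {0..T}))))"

end

theory Submission
  imports Defs
begin

text \<open>For fixed \<open>x\<close>, the Caputo derivative of \<open>u(x, \<cdot>)\<close> at \<open>t\<close> is a fractional integral of
  order \<open>dbar \<delta> - \<delta> > 0\<close> of the bounded function \<open>\<partial>\<^sub>t\<^bsup>dbar \<delta>\<^esup> u(x, \<cdot>)\<close>, hence is
  \<open>O(t\<^bsup>dbar \<delta> - \<delta>\<^esup>)\<close> and vanishes as \<open>t \<rightarrow> 0\<^sup>+\<close>. Letting \<open>t \<rightarrow> 0\<^sup>+\<close> in the equation, the
  spatial terms converge by continuity of the coefficients and of the derivatives of \<open>u\<close> on the
  closed cylinder, and these limits are the spatial derivatives of \<open>\<phi>0 = u(\<cdot>, 0)\<close>.\<close>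

lemma continuous_on_cylQbar_time_slice:
  assumes "continuous_on (cylQbar \<Omega> T) (\<lambda>(x, t). F x t)" "x \<in> closure \<Omega>"
  shows "continuous_on {0..T} (\<lambda>t. F x t)"
  by (rule continuous_on_compose2[OF assms(1), of _ "\<lambda>t. (x, t)", simplified])
     (use assms(2) in \<open>auto simp: cylQbar_def intro!: continuous_intros\<close>)

lemma tendsto_at_right_0_cylQbar:
  assumes "continuous_on (cylQbar \<Omega> T) (\<lambda>(x, t). F x t)" "x \<in> closure \<Omega>" "T > 0"
  shows "((\<lambda>t. F x t) \<longlongrightarrow> F x 0) (at_right 0)"
proof -
  have "((\<lambda>t. F x t) \<longlongrightarrow> F x 0) (at 0 within {0..T})"
    using continuous_on_cylQbar_time_slice[OF assms(1,2)] assms(3) by (simp add: continuous_on_def)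
  then show ?thesis
    by (simp add: at_within_Icc_at_right[OF assms(3)])
qed

lemma has_partial_unique: "has_partial w i x D1 \<Longrightarrow> has_partial w i x D2 \<Longrightarrow> D1 = D2"
  unfolding has_partial_def by (rule DERIV_unique)

lemma open_contains_axis_segment:
  fixes \<Omega> :: "(real^'n) set" and i :: 'n
  assumes "open \<Omega>" "x \<in> \<Omega>"
  obtains e where "e > 0" "\<And>s. \<bar>s\<bar> < e \<Longrightarrow> x + s *\<^sub>R axis i 1 \<in> \<Omega>"
proof -
  obtain e where "e > 0" "ball x e \<subseteq> \<Omega>"
    using assms open_contains_ball by blast
  then show ?thesis
    by (intro that[of e]) (auto simp: dist_norm norm_axis_1 subset_iff)
qed

lemma has_partial_cong_open:
  fixes w1 w2 :: "real^'n \<Rightarrow> real"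
  assumes "open \<Omega>" "x \<in> \<Omega>" "\<And>y. y \<in> \<Omega> \<Longrightarrow> w1 y = w2 y" "has_partial w1 i x D"
  shows "has_partial w2 i x D"
proof -
  obtain e where "e > 0" and seg: "\<And>s. \<bar>s\<bar> < e \<Longrightarrow> x + s *\<^sub>R axis i 1 \<in> \<Omega>"
    using open_contains_axis_segment[OF assms(1,2), of i] by blast
  show ?thesis
    using assms(4) unfolding has_partial_def
    by (rule has_field_derivative_transform_within_open[where S = "ball 0 e"])
       (use \<open>e > 0\<close> seg assms(3) in auto)
qed

lemma has_partial_imp_axis_line_derivative:
  assumes "has_partial w i (x + s *\<^sub>R axis i 1) D"
  shows "((\<lambda>h. w (x + h *\<^sub>R axis i 1)) has_real_derivative D) (at s)"
proof -
  have "((\<lambda>k. w (x + (k + s) *\<^sub>R axis i 1)) has_real_derivative D) (at 0)"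
    using assms by (simp add: has_partial_def scaleR_add_left algebra_simps)
  then show ?thesis
    using DERIV_shift[of "\<lambda>h. w (x + h *\<^sub>R axis i 1)" D 0 s] by simp
qed

lemma mvt_from_0:
  fixes \<phi> \<phi>' :: "real \<Rightarrow> real"
  assumes "\<And>s. \<bar>s\<bar> \<le> \<bar>h\<bar> \<Longrightarrow> (\<phi> has_real_derivative \<phi>' s) (at s)"
  shows "\<exists>z. \<bar>z\<bar> \<le> \<bar>h\<bar> \<and> \<phi> h - \<phi> 0 = h * \<phi>' z"
proof (cases h "0::real" rule: linorder_cases)
  case less
  then obtain z where "h < z" "z < 0" "\<phi> 0 - \<phi> h = (0 - h) * \<phi>' z"
    using MVT2[of h 0 \<phi> \<phi>'] assms by auto
  then show ?thesis by (intro exI[of _ z]) (auto simp: algebra_simps)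
next
  case greater
  then obtain z where "0 < z" "z < h" "\<phi> h - \<phi> 0 = (h - 0) * \<phi>' z"
    using MVT2[of 0 h \<phi> \<phi>'] assms by auto
  then show ?thesis by (intro exI[of _ z]) auto
qed simp

text \<open>By the mean value theorem, the difference quotient at time \<open>t\<close> is a value of \<open>G\<close> at a point
  near \<open>(x, t)\<close>; continuity of \<open>G\<close> at \<open>(x, 0)\<close> makes the approximation uniform in small \<open>t\<close>.\<close>
lemma axis_difference_quotient_near_initial_time:
  fixes g G :: "real^'n \<Rightarrow> real \<Rightarrow> real"
  assumes "open \<Omega>" "x \<in> \<Omega>" "T > 0" "\<epsilon> > 0"
    and cG: "continuous_on (cylQbar \<Omega> T) (\<lambda>(y, t). G y t)"
    and partial: "\<And>y t. y \<in> \<Omega> \<Longrightarrow> t \<in> {0<..T} \<Longrightarrow> has_partial (\<lambda>y. g y t) i y (G y t)"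
  obtains d where "d > 0" "\<And>h t. h \<noteq> 0 \<Longrightarrow> \<bar>h\<bar> < d \<Longrightarrow> t \<in> {0<..<d} \<Longrightarrow> t \<le> T \<Longrightarrow>
      \<bar>(g (x + h *\<^sub>R axis i 1) t - g x t) / h - G x 0\<bar> < \<epsilon>"
proof -
  define v where "v = (axis i 1 :: real^'n)"
  obtain e where "e > 0" and seg: "\<And>s. \<bar>s\<bar> < e \<Longrightarrow> x + s *\<^sub>R v \<in> \<Omega>"
    using open_contains_axis_segment[OF assms(1,2), of i] unfolding v_def by blast
  have seg_cyl: "(x + s *\<^sub>R v, t) \<in> cylQbar \<Omega> T" if "\<bar>s\<bar> < e" "t \<in> {0..T}" for s t
    using seg[OF that(1)] that(2) closure_subset by (auto simp: cylQbar_def)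
  obtain d where "d > 0" and near: "\<And>y t. (y, t) \<in> cylQbar \<Omega> T \<Longrightarrow> dist (y, t) (x, 0) < d \<Longrightarrow>
      \<bar>G y t - G x 0\<bar> < \<epsilon>"
  proof -
    have "(x, 0) \<in> cylQbar \<Omega> T"
      using seg_cyl[of 0 0] \<open>e > 0\<close> \<open>T > 0\<close> by simp
    then show ?thesis
      using cG \<open>\<epsilon> > 0\<close> that unfolding continuous_on_iff
      by (metis (no_types, lifting) case_prod_conv dist_real_def)
  qed
  show ?thesis
  proof (rule that[of "min e (d / 2)"])
    fix h t assume h: "h \<noteq> 0" "\<bar>h\<bar> < min e (d / 2)" and t: "t \<in> {0<..<min e (d / 2)}" "t \<le> T"
    have "\<exists>z. \<bar>z\<bar> \<le> \<bar>h\<bar> \<and> g (x + h *\<^sub>R v) t - g (x + 0 *\<^sub>R v) t = h * G (x + z *\<^sub>R v) t"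
      by (rule mvt_from_0, unfold v_def, rule has_partial_imp_axis_line_derivative)
         (use partial seg[unfolded v_def] h t in auto)
    then obtain z where z: "\<bar>z\<bar> \<le> \<bar>h\<bar>" "(g (x + h *\<^sub>R v) t - g x t) / h = G (x + z *\<^sub>R v) t"
      using h(1) by auto
    have "dist (x + z *\<^sub>R v, t) (x, 0) \<le> \<bar>dist (x + z *\<^sub>R v) x\<bar> + \<bar>dist t 0\<bar>"
      unfolding dist_Pair_Pair by (rule sqrt_sum_squares_le_sum_abs)
    also have "\<dots> = \<bar>z\<bar> + \<bar>t\<bar>"
      by (simp add: dist_norm v_def norm_axis_1)
    also have "\<dots> < d"
      using z h t by auto
    finally have "\<bar>G (x + z *\<^sub>R v) t - G x 0\<bar> < \<epsilon>"
      using near[OF seg_cyl, of z t] z h t by auto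
    then show "\<bar>(g (x + h *\<^sub>R axis i 1) t - g x t) / h - G x 0\<bar> < \<epsilon>"
      using z(2) by (simp add: v_def)
  qed (use \<open>e > 0\<close> \<open>d > 0\<close> in auto)
qed

lemma has_partial_initial_time:
  fixes g G :: "real^'n \<Rightarrow> real \<Rightarrow> real"
  assumes "open \<Omega>" "x \<in> \<Omega>" "T > 0"
    and cg: "continuous_on (cylQbar \<Omega> T) (\<lambda>(y, t). g y t)"
    and cG: "continuous_on (cylQbar \<Omega> T) (\<lambda>(y, t). G y t)"
    and partial: "\<And>y t. y \<in> \<Omega> \<Longrightarrow> t \<in> {0<..T} \<Longrightarrow> has_partial (\<lambda>y. g y t) i y (G y t)"
  shows "has_partial (\<lambda>y. g y 0) i x (G x 0)"
  unfolding has_partial_def has_field_derivative_iff LIM_eq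
proof (intro allI impI)
  fix \<epsilon> :: real assume "\<epsilon> > 0"
  obtain e where "e > 0" and seg: "\<And>s. \<bar>s\<bar> < e \<Longrightarrow> x + s *\<^sub>R axis i 1 \<in> \<Omega>"
    using open_contains_axis_segment[OF assms(1,2), of i] by blast
  obtain d where "d > 0" and quotient: "\<And>h t. h \<noteq> 0 \<Longrightarrow> \<bar>h\<bar> < d \<Longrightarrow> t \<in> {0<..<d} \<Longrightarrow> t \<le> T \<Longrightarrow>
      \<bar>(g (x + h *\<^sub>R axis i 1) t - g x t) / h - G x 0\<bar> < \<epsilon> / 2"
    using axis_difference_quotient_near_initial_time[OF assms(1-3) _ cG partial, of "\<epsilon> / 2"] \<open>\<epsilon> > 0\<close>
    by auto
  show "\<exists>s>0. \<forall>h. h \<noteq> 0 \<and> norm (h - 0) < s \<longrightarrow>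
     norm ((g (x + h *\<^sub>R axis i 1) 0 - g (x + 0 *\<^sub>R axis i 1) 0) / (h - 0) - G x 0) < \<epsilon>"
  proof (intro exI[of _ "min e d"] conjI allI impI)
    fix h :: real assume h: "h \<noteq> 0 \<and> norm (h - 0) < min e d"
    let ?q = "\<lambda>t. (g (x + h *\<^sub>R axis i 1) t - g x t) / h"
    have "(?q \<longlongrightarrow> ?q 0) (at_right 0)"
      using seg[of h] seg[of 0] h closure_subset \<open>e > 0\<close>
      by (intro tendsto_intros tendsto_at_right_0_cylQbar[OF cg _ \<open>T > 0\<close>]) auto
    moreover have "eventually (\<lambda>t. \<bar>?q t - G x 0\<bar> \<le> \<epsilon> / 2) (at_right 0)"
      unfolding eventually_at_right_field
      using quotient h \<open>T > 0\<close> \<open>d > 0\<close> by (intro exI[of _ "min T d"]) (auto simp: less_imp_le)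
    ultimately have "\<bar>?q 0 - G x 0\<bar> \<le> \<epsilon> / 2"
      by (intro tendsto_upperbound[OF tendsto_rabs[OF tendsto_diff]]) auto
    then show "norm ((g (x + h *\<^sub>R axis i 1) 0 - g (x + 0 *\<^sub>R axis i 1) 0) / (h - 0) - G x 0) < \<epsilon>"
      using \<open>\<epsilon> > 0\<close> by simp
  qed (use \<open>e > 0\<close> \<open>d > 0\<close> in auto)
qed

lemma has_integral_powr_kernel:
  fixes a t :: real
  assumes "0 < a" "0 \<le> t"
  shows "((\<lambda>s. (t - s) powr (a - 1)) has_integral t powr a / a) {0..t}"
proof -
  have "((\<lambda>s. (t - s) powr (a - 1)) has_integral
          (\<lambda>s. - ((t - s) powr a / a)) t - (\<lambda>s. - ((t - s) powr a / a)) 0) {0..t}"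
  proof (rule fundamental_theorem_of_calculus_interior)
    show "continuous_on {0..t} (\<lambda>s. - ((t - s) powr a / a))"
      by (intro continuous_intros continuous_on_powr') (use assms in auto)
    fix s assume s: "s \<in> {0<..<t}"
    have "((\<lambda>s. (t - s) powr a) has_real_derivative (t - s) powr a * (0 * ln (t - s) + (-1) * a / (t - s))) (at s)"
      by (rule DERIV_powr) (use s in \<open>auto intro!: derivative_eq_intros\<close>)
    moreover have "(t - s) powr a * (0 * ln (t - s) + (-1) * a / (t - s)) = - (a * (t - s) powr (a - 1))"
      using s by (simp add: powr_diff field_simps)
    ultimately show "((\<lambda>s. - ((t - s) powr a / a)) has_vector_derivative (t - s) powr (a - 1)) (at s)"
      using assms s
      by (auto intro!: derivative_eq_intros simp: has_real_derivative_iff_has_vector_derivative[symmetric])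
  qed (use assms in auto)
  then show ?thesis
    using assms by simp
qed

lemma powr_kernel_integral_bound:
  fixes a t M I :: real and h :: "real \<Rightarrow> real"
  assumes "0 < a" "0 < t"
    and integral: "((\<lambda>s. (t - s) powr (a - 1) * h s) has_integral I) {0..t}"
    and bound: "\<And>s. s \<in> {0<..<t} \<Longrightarrow> \<bar>h s\<bar> \<le> M"
  shows "\<bar>I\<bar> \<le> M * t powr a / a"
proof -
  have open_interval: "(f has_integral y) {0<..<t} \<longleftrightarrow> (f has_integral y) {0..t}" for f :: "real \<Rightarrow> real" and y
    using has_integral_open_interval[of f y 0 t] by simp
  have kernel: "((\<lambda>s. M * (t - s) powr (a - 1)) has_integral M * (t powr a / a)) {0<..<t}"
    using has_integral_mult_right[OF has_integral_powr_kernel[OF assms(1)], of t M] assms(2)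
    by (simp add: open_interval)
  have integral': "((\<lambda>s. (t - s) powr (a - 1) * h s) has_integral I) {0<..<t}"
    using integral by (simp add: open_interval)
  have "norm (integral {0<..<t} (\<lambda>s. (t - s) powr (a - 1) * h s))
          \<le> integral {0<..<t} (\<lambda>s. M * (t - s) powr (a - 1))"
  proof (rule integral_norm_bound_integral)
    fix s assume "s \<in> {0<..<t}"
    then show "norm ((t - s) powr (a - 1) * h s) \<le> M * (t - s) powr (a - 1)"
      using mult_left_mono[OF bound, of s "(t - s) powr (a - 1)"] by (simp add: abs_mult mult.commute)
  qed (use integral' kernel in blast)+
  then show ?thesis
    unfolding integral_unique[OF integral'] integral_unique[OF kernel] by simp
qed

definition has_dbar_derivative_on :: "real \<Rightarrow> (real \<Rightarrow> real) \<Rightarrow> (real \<Rightarrow> real) \<Rightarrow> real set \<Rightarrow> bool" where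
  "has_dbar_derivative_on \<delta> g dg S \<longleftrightarrow>
     (if dbar \<delta> = 1 then \<forall>s\<in>S. (g has_real_derivative dg s) (at s)
      else \<exists>g1. \<forall>s\<in>S. (g has_real_derivative g1 s) (at s) \<and> (g1 has_real_derivative dg s) (at s))"

lemma dbar_eq_2: "dbar \<delta> \<noteq> 1 \<Longrightarrow> dbar \<delta> = 2"
  by (simp add: dbar_def split: if_splits)

lemma dbar_gt: "\<delta> < 2 \<Longrightarrow> \<delta> < real (dbar \<delta>)"
  by (simp add: dbar_def)

lemma has_caputo_iff:
  "has_caputo \<delta> g t D \<longleftrightarrow>
     (\<exists>dg. has_dbar_derivative_on \<delta> g dg {0<..<t} \<and>
        ((\<lambda>s. (t - s) powr (real (dbar \<delta>) - \<delta> - 1) * dg s)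
           has_integral (Gamma (real (dbar \<delta>) - \<delta>) * D)) {0..t})"
  by (simp add: has_caputo_def has_dbar_derivative_on_def)

lemma has_dbar_derivative_on_subset:
  "has_dbar_derivative_on \<delta> g dg S \<Longrightarrow> S' \<subseteq> S \<Longrightarrow> has_dbar_derivative_on \<delta> g dg S'"
  unfolding has_dbar_derivative_on_def by (cases "dbar \<delta> = 1") (simp_all, blast+)

lemma has_dbar_derivative_on_unique:
  assumes "has_dbar_derivative_on \<delta> g dg S" "has_dbar_derivative_on \<delta> g dg' S" "open S" "s \<in> S"
  shows "dg s = dg' s"
proof (cases "dbar \<delta> = 1")
  case True
  then have "(g has_real_derivative dg s) (at s)" "(g has_real_derivative dg' s) (at s)"
    using assms by (simp_all add: has_dbar_derivative_on_def)
  then show ?thesis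
    by (rule DERIV_unique)
next
  case False
  obtain g1 where g1: "\<forall>s\<in>S. (g has_real_derivative g1 s) (at s) \<and> (g1 has_real_derivative dg s) (at s)"
    using assms(1) unfolding has_dbar_derivative_on_def if_not_P[OF False] by blast
  obtain g1' where g1': "\<forall>s\<in>S. (g has_real_derivative g1' s) (at s) \<and> (g1' has_real_derivative dg' s) (at s)"
    using assms(2) unfolding has_dbar_derivative_on_def if_not_P[OF False] by blast
  have same_g1: "g1' s' = g1 s'" if "s' \<in> S" for s'
    using g1 g1' that by (blast intro: DERIV_unique)
  have "(g1 has_real_derivative dg' s) (at s)"
    by (rule has_field_derivative_transform_within_open[OF _ assms(3,4) same_g1]) (use g1' assms(4) in blast)
  moreover have "(g1 has_real_derivative dg s) (at s)"
    using g1 assms(4) by blast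
  ultimately show ?thesis
    by (rule DERIV_unique[rotated])
qed

lemma has_dbar_derivative_on_within_interval:
  assumes "\<And>s. s \<in> {0<..<T} \<Longrightarrow> (g has_real_derivative g1 s) (at s within {0..T})"
    and "\<And>s. dbar \<delta> = 2 \<Longrightarrow> s \<in> {0<..<T} \<Longrightarrow> (g1 has_real_derivative g2 s) (at s within {0..T})"
  shows "has_dbar_derivative_on \<delta> g (if dbar \<delta> = 1 then g1 else g2) {0<..<T}"
proof -
  have at_interior: "at s within {0..T} = at s" if "s \<in> {0<..<T}" for s
    using that by (intro at_within_interior) auto
  show ?thesis
  proof (cases "dbar \<delta> = 1")
    case True
    then show ?thesis
      using assms(1) by (simp add: has_dbar_derivative_on_def at_interior)
  next
    case False
    show ?thesis
      unfolding has_dbar_derivative_on_def if_not_P[OF False]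
      using assms(1) assms(2)[OF dbar_eq_2[OF False]]
      by (intro exI[of _ g1]) (simp add: at_interior)
  qed
qed

lemma has_caputo_bound:
  assumes "\<delta> < 2" "0 < t" "has_caputo \<delta> g t D"
    and "has_dbar_derivative_on \<delta> g gd {0<..<t}"
    and bound: "\<And>s. s \<in> {0<..<t} \<Longrightarrow> \<bar>gd s\<bar> \<le> M"
  shows "\<bar>D\<bar> \<le> M * t powr (real (dbar \<delta>) - \<delta>) / Gamma (real (dbar \<delta>) - \<delta> + 1)"
proof -
  define a where "a = real (dbar \<delta>) - \<delta>"
  have "0 < a"
    using dbar_gt[OF assms(1)] by (simp add: a_def)
  obtain dg where dg: "has_dbar_derivative_on \<delta> g dg {0<..<t}"
    and integral: "((\<lambda>s. (t - s) powr (a - 1) * dg s) has_integral (Gamma a * D)) {0..t}"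
    using assms(3) by (auto simp: has_caputo_iff a_def)
  have "dg s = gd s" if "s \<in> {0<..<t}" for s
    by (rule has_dbar_derivative_on_unique[OF dg assms(4) open_greaterThanLessThan that])
  then have "\<bar>Gamma a * D\<bar> \<le> M * t powr a / a"
    using powr_kernel_integral_bound[OF \<open>0 < a\<close> assms(2) integral] bound by simp
  moreover have "Gamma (a + 1) = a * Gamma a" "Gamma a > 0"
    using \<open>0 < a\<close> by (auto simp: Gamma_plus1 nonpos_Ints_def)
  ultimately have "\<bar>D\<bar> \<le> M * t powr a / Gamma (a + 1)"
    using \<open>0 < a\<close> by (simp add: abs_mult field_simps)
  then show ?thesis
    by (simp add: a_def)
qed

lemma has_caputo_tendsto_0:
  assumes "\<delta> < 2" "0 < T"
    and gd: "has_dbar_derivative_on \<delta> g gd {0<..<T}" "continuous_on {0..T} gd"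
    and D: "\<And>t. t \<in> {0<..T} \<Longrightarrow> has_caputo \<delta> g t (D t)"
  shows "(D \<longlongrightarrow> 0) (at_right 0)"
proof -
  define a where "a = real (dbar \<delta>) - \<delta>"
  have "0 < a"
    using dbar_gt[OF assms(1)] by (simp add: a_def)
  obtain M where M: "\<And>s. s \<in> {0..T} \<Longrightarrow> \<bar>gd s\<bar> \<le> M"
    using compact_imp_bounded[OF compact_continuous_image[OF gd(2) compact_Icc]]
    unfolding bounded_iff by (auto simp del: atLeastAtMost_iff)
  have "eventually (\<lambda>t. norm (D t) \<le> M * t powr a / Gamma (a + 1)) (at_right 0)"
    unfolding eventually_at_right_field
  proof (intro exI[of _ T] conjI allI impI)
    fix t :: real assume "0 < t" "t < T"
    then show "norm (D t) \<le> M * t powr a / Gamma (a + 1)"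
      using has_caputo_bound[OF assms(1) _ D has_dbar_derivative_on_subset[OF gd(1)], of t M] M
      by (simp add: a_def subset_eq)
  qed (use \<open>0 < T\<close> in simp)
  moreover have "((\<lambda>t. M * t powr a / Gamma (a + 1)) \<longlongrightarrow> 0) (at_right 0)"
    using \<open>0 < a\<close> by (intro tendsto_divide_zero tendsto_mult_right_zero tendsto_zero_powrI)
                   (auto intro: tendsto_ident_at eventually_at_rightI[of 0 1])
  ultimately show ?thesis
    by (rule Lim_null_comparison)
qed

lemma classical_solution_has_caputo:
  fixes Rx :: "'n \<Rightarrow> real^'n \<Rightarrow> real" and Rxx :: "'n \<Rightarrow> 'n \<Rightarrow> real"
  assumes "open \<Omega>" "classical_solution \<Omega> T \<delta> p q r f \<psi> \<phi>0 \<phi>1 u" "x \<in> \<Omega>" "t \<in> {0<..T}"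
    and Rx: "\<And>i y. y \<in> \<Omega> \<Longrightarrow> has_partial (\<lambda>y. u y t) i y (Rx i y)"
    and Rxx: "\<And>i j. has_partial (Rx j) i x (Rxx i j)"
  shows "has_caputo \<delta> (\<lambda>s. u x s) t (f x t - spatial_op p q r x t Rxx (\<lambda>i. Rx i x) (u x t))"
proof -
  obtain Ux Uxx where sol: "\<forall>(y, t)\<in>cylQ \<Omega> T.
        (\<forall>i. has_partial (\<lambda>y. u y t) i y (Ux i y t)) \<and>
        (\<forall>i j. has_partial (\<lambda>y. Ux j y t) i y (Uxx i j y t)) \<and>
        (\<exists>D. has_caputo \<delta> (\<lambda>s. u y s) t D \<and>
             D + spatial_op p q r y t (\<lambda>i j. Uxx i j y t) (\<lambda>i. Ux i y t) (u y t) = f y t)"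
    using assms(2) unfolding classical_solution_def by blast
  have sol_t: "(\<forall>i. has_partial (\<lambda>y. u y t) i y (Ux i y t)) \<and>
        (\<forall>i j. has_partial (\<lambda>y. Ux j y t) i y (Uxx i j y t)) \<and>
        (\<exists>D. has_caputo \<delta> (\<lambda>s. u y s) t D \<and>
             D + spatial_op p q r y t (\<lambda>i j. Uxx i j y t) (\<lambda>i. Ux i y t) (u y t) = f y t)"
    if "y \<in> \<Omega>" for y
    using bspec[OF sol, of "(y, t)"] that assms(4) by (simp add: cylQ_def)
  have Ux: "Ux i y t = Rx i y" if "y \<in> \<Omega>" for i y
    using sol_t[OF that] by (intro has_partial_unique[OF _ Rx[OF that]]) blast
  have "has_partial (Rx j) i x (Uxx i j x t)" for i j
  proof -
    have "has_partial (\<lambda>y. Ux j y t) i x (Uxx i j x t)"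
      using sol_t[OF assms(3)] by blast
    then show ?thesis
      by (rule has_partial_cong_open[OF assms(1,3), rotated]) (simp add: Ux)
  qed
  then have Uxx: "Uxx i j x t = Rxx i j" for i j
    using Rxx by (rule has_partial_unique)
  obtain D where "has_caputo \<delta> (\<lambda>s. u x s) t D"
    and "D + spatial_op p q r x t (\<lambda>i j. Uxx i j x t) (\<lambda>i. Ux i x t) (u x t) = f x t"
    using sol_t[OF assms(3)] by blast
  moreover from this(2) have "D = f x t - spatial_op p q r x t Rxx (\<lambda>i. Rx i x) (u x t)"
    by (simp add: Ux[OF assms(3)] Uxx eq_diff_eq)
  ultimately show ?thesis
    by simp
qed

lemma classical_solution_initial_equation:
  fixes Ux :: "'n \<Rightarrow> real^'n \<Rightarrow> real \<Rightarrow> real" and Uxx :: "'n \<Rightarrow> 'n \<Rightarrow> real^'n \<Rightarrow> real \<Rightarrow> real"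
    and ut utt :: "real \<Rightarrow> real"
  assumes "open \<Omega>" "T > 0" "\<delta> < 2" "x \<in> \<Omega>"
    and sol: "classical_solution \<Omega> T \<delta> p q r f \<psi> \<phi>0 \<phi>1 u"
    and cp: "\<forall>i j. continuous_on (cylQbar \<Omega> T) (\<lambda>(x, t). p i j x t)"
    and cq: "\<forall>i. continuous_on (cylQbar \<Omega> T) (\<lambda>(x, t). q i x t)"
    and cr: "continuous_on (cylQbar \<Omega> T) (\<lambda>(x, t). r x t)"
    and cf: "continuous_on (cylQbar \<Omega> T) (\<lambda>(x, t). f x t)"
    and cu: "continuous_on (cylQbar \<Omega> T) (\<lambda>(x, t). u x t)"
    and cUx: "\<And>i. continuous_on (cylQbar \<Omega> T) (\<lambda>(x, t). Ux i x t)"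
    and cUxx: "\<And>i j. continuous_on (cylQbar \<Omega> T) (\<lambda>(x, t). Uxx i j x t)"
    and cut: "continuous_on {0..T} ut" and cutt: "dbar \<delta> = 2 \<Longrightarrow> continuous_on {0..T} utt"
    and Ux: "\<And>i y t. y \<in> \<Omega> \<Longrightarrow> t \<in> {0<..T} \<Longrightarrow> has_partial (\<lambda>y. u y t) i y (Ux i y t)"
    and Uxx: "\<And>i j t. t \<in> {0<..T} \<Longrightarrow> has_partial (\<lambda>y. Ux j y t) i x (Uxx i j x t)"
    and ut: "\<And>t. t \<in> {0<..<T} \<Longrightarrow> ((\<lambda>s. u x s) has_real_derivative ut t) (at t within {0..T})"
    and utt: "\<And>t. dbar \<delta> = 2 \<Longrightarrow> t \<in> {0<..<T} \<Longrightarrow> (ut has_real_derivative utt t) (at t within {0..T})"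
  shows "spatial_op p q r x 0 (\<lambda>i j. Uxx i j x 0) (\<lambda>i. Ux i x 0) (u x 0) = f x 0"
proof -
  define S where "S t = spatial_op p q r x t (\<lambda>i j. Uxx i j x t) (\<lambda>i. Ux i x t) (u x t)" for t
  have "x \<in> closure \<Omega>"
    using \<open>x \<in> \<Omega>\<close> closure_subset by blast
  have "((\<lambda>t. f x t - S t) \<longlongrightarrow> 0) (at_right 0)"
  proof (rule has_caputo_tendsto_0[OF \<open>\<delta> < 2\<close> \<open>T > 0\<close>])
    show "has_dbar_derivative_on \<delta> (\<lambda>s. u x s) (if dbar \<delta> = 1 then ut else utt) {0<..<T}"
      using ut utt by (rule has_dbar_derivative_on_within_interval)
    show "continuous_on {0..T} (if dbar \<delta> = 1 then ut else utt)"
      using cut cutt dbar_eq_2 by auto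
    show "has_caputo \<delta> (\<lambda>s. u x s) t (f x t - S t)" if "t \<in> {0<..T}" for t
      unfolding S_def using Ux Uxx that
      by (intro classical_solution_has_caputo[OF \<open>open \<Omega>\<close> sol \<open>x \<in> \<Omega>\<close> that]) auto
  qed
  moreover have "((\<lambda>t. f x t - S t) \<longlongrightarrow> f x 0 - S 0) (at_right 0)"
    unfolding S_def spatial_op_def
    by (intro tendsto_intros tendsto_at_right_0_cylQbar[OF _ \<open>x \<in> closure \<Omega>\<close> \<open>T > 0\<close>] cf cr cu cUx cUxx)
       (use cp cq in auto)
  ultimately show ?thesis
    using tendsto_unique[of "at_right 0"] by (force simp: S_def)
qed

theorem theorem2p3:
  fixes \<Omega> :: "(real^'n) set" and T \<delta> :: real
    and p :: "'n \<Rightarrow> 'n \<Rightarrow> real^'n \<Rightarrow> real \<Rightarrow> real"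
    and q :: "'n \<Rightarrow> real^'n \<Rightarrow> real \<Rightarrow> real"
    and r f \<psi> u :: "real^'n \<Rightarrow> real \<Rightarrow> real"
    and \<phi>0 \<phi>1 :: "real^'n \<Rightarrow> real"
  assumes dom: "open \<Omega>" "connected \<Omega>" "bounded \<Omega>" "\<Omega> \<noteq> {}"
    and T: "T > 0"
    and del: "(0 < \<delta> \<and> \<delta> < 1) \<or> (1 < \<delta> \<and> \<delta> < 2)"
    and ellip: "\<exists>c>0. \<forall>(x, t)\<in>cylQ \<Omega> T. \<forall>\<xi>::real^'n.
                  (\<Sum>i\<in>UNIV. \<Sum>j\<in>UNIV. p i j x t * \<xi>$i * \<xi>$j) \<ge> c * (norm \<xi>)^2"
    and cp: "\<forall>i j. continuous_on (cylQbar \<Omega> T) (\<lambda>(x, t). p i j x t)"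
    and cq: "\<forall>i. continuous_on (cylQbar \<Omega> T) (\<lambda>(x, t). q i x t)"
    and cr: "continuous_on (cylQbar \<Omega> T) (\<lambda>(x, t). r x t)"
    and cf: "continuous_on (cylQbar \<Omega> T) (\<lambda>(x, t). f x t)"
    and cpsi: "continuous_on (frontier \<Omega> \<times> {0..T}) (\<lambda>(x, t). \<psi> x t)"
    and cphi0: "continuous_on (closure \<Omega>) \<phi>0"
    and cphi1: "continuous_on (closure \<Omega>) \<phi>1"
    and compat: "\<forall>x\<in>frontier \<Omega>. \<phi>0 x = \<psi> x 0"
    and sol: "classical_solution \<Omega> T \<delta> p q r f \<psi> \<phi>0 \<phi>1 u"
    and reg: "C2dbar \<delta> \<Omega> T u"
  shows "\<exists>Px Pxx. \<forall>x\<in>\<Omega>.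
           (\<forall>i. has_partial \<phi>0 i x (Px i x)) \<and>
           (\<forall>i j. has_partial (Px j) i x (Pxx i j x)) \<and>
           spatial_op p q r x 0 (\<lambda>i j. Pxx i j x) (\<lambda>i. Px i x) (\<phi>0 x) = f x 0"
proof -
  obtain Ux Uxx Ut Utt where
      cUx: "\<And>i. continuous_on (cylQbar \<Omega> T) (\<lambda>(x, t). Ux i x t)" and
      cUxx: "\<And>i j. continuous_on (cylQbar \<Omega> T) (\<lambda>(x, t). Uxx i j x t)" and
      cUt: "continuous_on (cylQbar \<Omega> T) (\<lambda>(x, t). Ut x t)" and
      cUtt: "dbar \<delta> = 2 \<Longrightarrow> continuous_on (cylQbar \<Omega> T) (\<lambda>(x, t). Utt x t)" and
      derivs: "\<forall>x\<in>\<Omega>. \<forall>t\<in>{0<..T}.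
           (\<forall>i. has_partial (\<lambda>y. u y t) i x (Ux i x t)) \<and>
           (\<forall>i j. has_partial (\<lambda>y. Ux j y t) i x (Uxx i j x t)) \<and>
           ((\<lambda>s. u x s) has_real_derivative Ut x t) (at t within {0..T}) \<and>
           (dbar \<delta> = 2 \<longrightarrow> ((\<lambda>s. Ut x s) has_real_derivative Utt x t) (at t within {0..T}))"
    using reg unfolding C2dbar_def cylQ_def split_paired_Ball_Sigma by (elim conjE exE) (rule that; simp)
  have cu: "continuous_on (cylQbar \<Omega> T) (\<lambda>(x, t). u x t)"
    using reg by (simp add: C2dbar_def)
  have initial: "\<forall>x\<in>closure \<Omega>. u x 0 = \<phi>0 x"
    using sol by (simp add: classical_solution_def)
  show ?thesis
  proof (intro exI[of _ "\<lambda>i x. Ux i x 0"] exI[of _ "\<lambda>i j x. Uxx i j x 0"] ballI conjI allI)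
    fix x assume x: "x \<in> \<Omega>"
    have "has_partial (\<lambda>y. u y 0) i x (Ux i x 0)" for i
      using derivs by (intro has_partial_initial_time[OF dom(1) x T cu cUx]) auto
    then show "has_partial \<phi>0 i x (Ux i x 0)" for i
      by (rule has_partial_cong_open[OF dom(1) x, rotated]) (use initial closure_subset in auto)
    show "has_partial (\<lambda>x. Ux j x 0) i x (Uxx i j x 0)" for i j
      using derivs by (intro has_partial_initial_time[OF dom(1) x T cUx cUxx]) auto
    have "\<delta> < 2" "x \<in> closure \<Omega>"
      using del x closure_subset by auto
    then show "spatial_op p q r x 0 (\<lambda>i j. Uxx i j x 0) (\<lambda>i. Ux i x 0) (\<phi>0 x) = f x 0"
      using classical_solution_initial_equation[OF dom(1) T _ x sol cp cq cr cf cu cUx cUxx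
          continuous_on_cylQbar_time_slice[OF cUt] continuous_on_cylQbar_time_slice[OF cUtt]]
        derivs x initial by auto
  qed
qed

end
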